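(* For every $\varepsilon>0$ there exists a nonsplit characteristically nilpotent Lie algebra $\mathfrak{h}$ such that \[\frac{\dim\mathfrak{h}-\dim Z(\mathfrak{h})}{\dim Z(\mathfrak{h})}<\varepsilon.\]
   Context: All Lie algebras are finite-dimensional and complex. $Z(\mathfrak{h})$ denotes the center. A Lie algebra is nonsplit if it is not the direct sum of two nonzero ideals. A nilpotent Lie algebra $\mathfrak{g}$ is characteristically nilpotent if there is $m$ with $\mathfrak{g}^{[m]}=0$, where $\mathfrak{g}^{[1]}=\{f(Y): f\in \mathrm{Der}(\mathfrak{g}), Y\in\mathfrak{g}\}$ and $\mathfrak{g}^{[k]}=\mathrm{Der}(\mathfrak{g})(\mathfrak{g}^{[k-1]})$ (equivalently, $\mathrm{Der}(\mathfrak{g})$ is nilpotent). *)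

theory Defs
  imports "HOL-Analysis.Analysis" "HOL-Library.Function_Algebras"
begin

text \<open>A finite-dimensional complex Lie algebra of dimension n is modelled on the
coordinate space V n = { v :: nat => complex | v i = 0 for i >= n } (= C^n)
with a bracket given by structure constants c i j k ([e_i, e_j] = sum_k c i j k e_k).
Every n-dimensional complex Lie algebra is isomorphic to one of this form.\<close>

definition csc :: "complex \<Rightarrow> (nat \<Rightarrow> complex) \<Rightarrow> (nat \<Rightarrow> complex)" where
  "csc a v = (\<lambda>i. a * v i)"

definition V :: "nat \<Rightarrow> (nat \<Rightarrow> complex) set" where
  "V n = {v. \<forall>i\<ge>n. v i = 0}"

definition br :: "nat \<Rightarrow> (nat \<Rightarrow> nat \<Rightarrow> nat \<Rightarrow> complex)
    \<Rightarrow> (nat \<Rightarrow> complex) \<Rightarrow> (nat \<Rightarrow> complex) \<Rightarrow> (nat \<Rightarrow> complex)" where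
  "br n c x y = (\<lambda>k. if k < n then (\<Sum>i<n. \<Sum>j<n. x i * y j * c i j k) else 0)"

definition is_lie :: "nat \<Rightarrow> (nat \<Rightarrow> nat \<Rightarrow> nat \<Rightarrow> complex) \<Rightarrow> bool" where
  "is_lie n c \<longleftrightarrow>
     (\<forall>x\<in>V n. br n c x x = 0) \<and>
     (\<forall>x\<in>V n. \<forall>y\<in>V n. \<forall>z\<in>V n.
        br n c x (br n c y z) + br n c y (br n c z x) + br n c z (br n c x y) = 0)"

definition cdim :: "(nat \<Rightarrow> complex) set \<Rightarrow> nat" where
  "cdim S = vector_space.dim csc S"

definition cspan :: "(nat \<Rightarrow> complex) set \<Rightarrow> (nat \<Rightarrow> complex) set" where
  "cspan S = module.span csc S"

definition csubspace :: "(nat \<Rightarrow> complex) set \<Rightarrow> bool" where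
  "csubspace S = module.subspace csc S"

definition center :: "nat \<Rightarrow> (nat \<Rightarrow> nat \<Rightarrow> nat \<Rightarrow> complex) \<Rightarrow> (nat \<Rightarrow> complex) set" where
  "center n c = {x \<in> V n. \<forall>y\<in>V n. br n c x y = 0}"

definition is_ideal :: "nat \<Rightarrow> (nat \<Rightarrow> nat \<Rightarrow> nat \<Rightarrow> complex) \<Rightarrow> (nat \<Rightarrow> complex) set \<Rightarrow> bool" where
  "is_ideal n c I \<longleftrightarrow> csubspace I \<and> I \<subseteq> V n \<and> (\<forall>x\<in>V n. \<forall>y\<in>I. br n c x y \<in> I)"

definition nonsplit :: "nat \<Rightarrow> (nat \<Rightarrow> nat \<Rightarrow> nat \<Rightarrow> complex) \<Rightarrow> bool" where
  "nonsplit n c \<longleftrightarrow> \<not> (\<exists>I J. is_ideal n c I \<and> is_ideal n c J \<and> I \<noteq> {0} \<and> J \<noteq> {0}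
      \<and> I \<inter> J = {0} \<and> {x + y | x y. x \<in> I \<and> y \<in> J} = V n)"

fun lcs :: "nat \<Rightarrow> (nat \<Rightarrow> nat \<Rightarrow> nat \<Rightarrow> complex) \<Rightarrow> nat \<Rightarrow> (nat \<Rightarrow> complex) set" where
  "lcs n c 0 = V n"
| "lcs n c (Suc k) = cspan {br n c x y | x y. x \<in> V n \<and> y \<in> lcs n c k}"

definition nilpotent_lie :: "nat \<Rightarrow> (nat \<Rightarrow> nat \<Rightarrow> nat \<Rightarrow> complex) \<Rightarrow> bool" where
  "nilpotent_lie n c \<longleftrightarrow> (\<exists>m. lcs n c m = {0})"

definition is_derivation :: "nat \<Rightarrow> (nat \<Rightarrow> nat \<Rightarrow> nat \<Rightarrow> complex)
    \<Rightarrow> ((nat \<Rightarrow> complex) \<Rightarrow> (nat \<Rightarrow> complex)) \<Rightarrow> bool" where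
  "is_derivation n c f \<longleftrightarrow>
     f ` V n \<subseteq> V n \<and>
     (\<forall>x\<in>V n. \<forall>y\<in>V n. \<forall>a b. f (csc a x + csc b y) = csc a (f x) + csc b (f y)) \<and>
     (\<forall>x\<in>V n. \<forall>y\<in>V n. f (br n c x y) = br n c (f x) y + br n c x (f y))"

fun dseq :: "nat \<Rightarrow> (nat \<Rightarrow> nat \<Rightarrow> nat \<Rightarrow> complex) \<Rightarrow> nat \<Rightarrow> (nat \<Rightarrow> complex) set" where
  "dseq n c 0 = V n"
| "dseq n c (Suc k) = {f y | f y. is_derivation n c f \<and> y \<in> dseq n c k}"

definition char_nilpotent :: "nat \<Rightarrow> (nat \<Rightarrow> nat \<Rightarrow> nat \<Rightarrow> complex) \<Rightarrow> bool" where
  "char_nilpotent n c \<longleftrightarrow> nilpotent_lie n c \<and> (\<exists>m\<ge>1. dseq n c m = {0})"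

end

theory Submission
  imports Defs
begin

text \<open>
  The algebra \<open>h\<^sub>d\<close> (\<open>d \<ge> 3\<close>) is 3-step nilpotent, with \<open>[h, h] = span {c, z\<^sub>i\<^sub>j}\<close> and
  center \<open>span {z\<^sub>i\<^sub>j}\<close> of dimension \<open>d\<^sup>2\<close>, while \<open>dim h\<^sub>d = d\<^sup>2 + 2d + 3\<close>; so the ratio is
  \<open>(2d + 3) / d\<^sup>2 \<le> 5 / d\<close>.
  Comparing \<open>z\<^sub>p\<^sub>q\<close>-coordinates in the Leibniz rule for pairs of basis vectors shows that a
  derivation maps the generators \<open>a, b, x\<^sub>i, y\<^sub>j\<close> into \<open>[h, h]\<close>; it then maps \<open>h\<close> into
  \<open>[h, h]\<close>, \<open>[h, h]\<close> into the center and the center to \<open>0\<close>, so products of three derivations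
  vanish. The same comparison for an element \<open>T\<close> of the centroid (\<open>T [u, v] = [T u, v] = [u, T v]\<close>)
  shows that \<open>T - \<mu>\<close> lowers this filtration for a scalar \<open>\<mu>\<close>. The projection onto \<open>I\<close> along
  \<open>J\<close> for a decomposition \<open>h = I \<oplus> J\<close> into ideals is an idempotent centroid element, so
  \<open>\<mu> \<in> {0, 1}\<close> and the projection is \<open>0\<close> or the identity.
\<close>

text \<open>Keeps the simplifier from rewriting the basis index \<open>1\<close> (the vector \<open>b\<close> below)
  to \<open>Suc 0\<close>, which would make the bracket table below unusable as simp rules.\<close>
declare One_nat_def [simp del]

section \<open>Coordinate vectors and linear maps\<close>

interpretation cv: vector_space csc
  by unfold_locales (auto simp: csc_def fun_eq_iff algebra_simps)

lemma csc_apply [simp]: "csc a v i = a * v i"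
  by (simp add: csc_def)

lemma sum_apply: "(\<Sum>a\<in>A. f a) x = (\<Sum>a\<in>A. f a x)"
  by (induction A rule: infinite_finite_induct) auto

lemma V_zero: "0 \<in> V n"
  and V_add: "x \<in> V n \<Longrightarrow> y \<in> V n \<Longrightarrow> x + y \<in> V n"
  and V_csc: "x \<in> V n \<Longrightarrow> csc a x \<in> V n"
  by (auto simp: V_def)

lemma subspace_V: "cv.subspace (V n)"
  by (auto simp: cv.subspace_def V_def)

definition unit_vec :: "nat \<Rightarrow> nat \<Rightarrow> complex" where
  "unit_vec k = (\<lambda>m. if m = k then 1 else 0)"

lemma unit_vec_apply [simp]: "unit_vec k m = (if m = k then 1 else 0)"
  by (simp add: unit_vec_def)

lemma unit_vec_in_V: "k < n \<Longrightarrow> unit_vec k \<in> V n"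
  by (simp add: V_def)

lemma inj_unit_vec: "inj unit_vec"
  by (rule injI) (metis unit_vec_apply zero_neq_one)

lemma sum_unit_vec:
  assumes "finite K" "\<And>k. k \<notin> K \<Longrightarrow> v k = 0"
  shows "(\<Sum>k\<in>K. csc (v k) (unit_vec k)) = v"
proof
  fix m
  have "(\<Sum>k\<in>K. csc (v k) (unit_vec k)) m = (\<Sum>k\<in>K. if m = k then v k else 0)"
    unfolding sum_apply by (rule sum.cong) auto
  also have "\<dots> = v m"
    using assms by (cases "m \<in> K") simp_all
  finally show "(\<Sum>k\<in>K. csc (v k) (unit_vec k)) m = v m" .
qed

lemma V_sum_unit_vec: "u \<in> V n \<Longrightarrow> (\<Sum>k<n. csc (u k) (unit_vec k)) = u"
  by (rule sum_unit_vec) (auto simp: V_def)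

lemma independent_unit_vec:
  assumes "finite K"
  shows "cv.independent (unit_vec ` K)"
proof (rule cv.independent_if_scalars_zero)
  show "finite (unit_vec ` K)" using assms by simp
  fix g w assume sum0: "(\<Sum>v\<in>unit_vec ` K. csc (g v) v) = 0" and "w \<in> unit_vec ` K"
  then obtain k where w: "w = unit_vec k" "k \<in> K" by blast
  have "0 = (\<Sum>v\<in>unit_vec ` K. csc (g v) v) k"
    using sum0 by simp
  also have "\<dots> = (\<Sum>v\<in>unit_vec ` K. if v = w then g v else 0)"
    unfolding sum_apply using w by (intro sum.cong) (auto simp: inj_eq[OF inj_unit_vec])
  also have "\<dots> = g w"
    using assms w by (simp add: sum.delta)
  finally show "g w = 0" by simp
qed

lemma cdim_coordinate_subspace:
  assumes "finite K"
  shows "cdim {v. \<forall>k. k \<notin> K \<longrightarrow> v k = 0} = card K"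
proof -
  let ?S = "{v :: nat \<Rightarrow> complex. \<forall>k. k \<notin> K \<longrightarrow> v k = 0}"
  have "unit_vec ` K \<subseteq> ?S" by auto
  moreover have "?S \<subseteq> cv.span (unit_vec ` K)"
  proof
    fix v assume "v \<in> ?S"
    then have "v = (\<Sum>k\<in>K. csc (v k) (unit_vec k))"
      using sum_unit_vec[OF assms] by simp
    also have "\<dots> \<in> cv.span (unit_vec ` K)"
      by (intro cv.span_sum cv.span_scale cv.span_base) auto
    finally show "v \<in> cv.span (unit_vec ` K)" .
  qed
  ultimately have "card (unit_vec ` K) = cv.dim ?S"
    using cv.basis_card_eq_dim independent_unit_vec[OF assms] by blast
  then show ?thesis
    by (simp add: cdim_def card_image[OF inj_on_subset[OF inj_unit_vec]])
qed

definition linear_V :: "nat \<Rightarrow> ((nat \<Rightarrow> complex) \<Rightarrow> (nat \<Rightarrow> complex)) \<Rightarrow> bool" where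
  "linear_V n f \<longleftrightarrow> f ` V n \<subseteq> V n \<and>
     (\<forall>x\<in>V n. \<forall>y\<in>V n. \<forall>a b. f (csc a x + csc b y) = csc a (f x) + csc b (f y))"

lemma linear_V_in_V: "linear_V n f \<Longrightarrow> x \<in> V n \<Longrightarrow> f x \<in> V n"
  by (auto simp: linear_V_def)

lemma linear_V_combination:
  "linear_V n f \<Longrightarrow> x \<in> V n \<Longrightarrow> y \<in> V n \<Longrightarrow> f (csc a x + csc b y) = csc a (f x) + csc b (f y)"
  by (simp add: linear_V_def)

lemma linear_V_zero: "linear_V n f \<Longrightarrow> f 0 = 0"
  using linear_V_combination[of n f 0 0 0 0] V_zero by simp

lemma linear_V_scale: "linear_V n f \<Longrightarrow> x \<in> V n \<Longrightarrow> f (csc a x) = csc a (f x)"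
  using linear_V_combination[of n f x x a 0] by simp

lemma linear_V_diff: "linear_V n f \<Longrightarrow> x \<in> V n \<Longrightarrow> y \<in> V n \<Longrightarrow> f (x - y) = f x - f y"
  using linear_V_combination[of n f x y 1 "-1"] by (simp add: cv.scale_minus_left)

lemma linear_V_sum:
  assumes "linear_V n f" "finite S" "\<And>k. k \<in> S \<Longrightarrow> x k \<in> V n"
  shows "f (\<Sum>k\<in>S. csc (a k) (x k)) = (\<Sum>k\<in>S. csc (a k) (f (x k)))"
  using assms(2,3)
proof (induction S rule: finite_induct)
  case empty
  then show ?case using linear_V_zero[OF assms(1)] by (simp only: sum.empty)
next
  case (insert k S)
  have "(\<Sum>k\<in>S. csc (a k) (x k)) \<in> V n"
    using insert by (auto intro: cv.subspace_sum[OF subspace_V] V_csc)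
  then have "f (csc (a k) (x k) + csc 1 (\<Sum>k\<in>S. csc (a k) (x k)))
      = csc (a k) (f (x k)) + csc 1 (f (\<Sum>k\<in>S. csc (a k) (x k)))"
    using insert by (intro linear_V_combination[OF assms(1)]) auto
  moreover have "f (\<Sum>k\<in>S. csc (a k) (x k)) = (\<Sum>k\<in>S. csc (a k) (f (x k)))"
    using insert by blast
  ultimately show ?case
    by (simp only: sum.insert[OF insert.hyps] cv.scale_one)
qed

lemma linear_V_expand:
  "linear_V n f \<Longrightarrow> u \<in> V n \<Longrightarrow> f u = (\<Sum>k<n. csc (u k) (f (unit_vec k)))"
  using linear_V_sum[of n f "{..<n}" unit_vec u] V_sum_unit_vec[of u n] unit_vec_in_V by simp

lemma linear_V_in_subspace:
  assumes "linear_V n f" "cv.subspace S" "u \<in> V n"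
    and "\<And>k. k < n \<Longrightarrow> u k \<noteq> 0 \<Longrightarrow> f (unit_vec k) \<in> S"
  shows "f u \<in> S"
  unfolding linear_V_expand[OF assms(1,3)]
proof (rule cv.subspace_sum[OF assms(2)])
  fix k assume "k \<in> {..<n}"
  then show "csc (u k) (f (unit_vec k)) \<in> S"
    using assms(4)[of k] cv.subspace_scale[OF assms(2)] cv.subspace_0[OF assms(2)]
    by (cases "u k = 0") (auto simp: csc_def zero_fun_def)
qed

lemma linear_V_minus_scalar:
  assumes "linear_V n T"
  shows "linear_V n (\<lambda>u. T u - csc \<mu> u)"
  using assms linear_V_in_V[OF assms]
  by (auto simp: linear_V_def fun_eq_iff algebra_simps intro!: cv.subspace_diff[OF subspace_V] V_csc)

section \<open>Lie algebras given by structure constants\<close>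

lemma br_in_V: "br n c x y \<in> V n"
  by (simp add: br_def V_def)

lemma br_combination_left:
  "br n c (csc a x + csc b y) z = csc a (br n c x z) + csc b (br n c y z)"
  by (auto simp: br_def fun_eq_iff sum_distrib_left sum.distrib algebra_simps)

lemma br_combination_right:
  "br n c z (csc a x + csc b y) = csc a (br n c z x) + csc b (br n c z y)"
  by (auto simp: br_def fun_eq_iff sum_distrib_left sum.distrib algebra_simps)

lemma br_antisym:
  assumes "is_lie n c" "x \<in> V n" "y \<in> V n"
  shows "br n c x y = - br n c y x"
proof -
  have add_left: "br n c (u + v) w = br n c u w + br n c v w" for u v w
    using br_combination_left[of n c 1 u 1 v w] by (simp add: csc_def)
  have add_right: "br n c w (u + v) = br n c w u + br n c w v" for u v w
    using br_combination_right[of n c w 1 u 1 v] by (simp add: csc_def)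
  have "0 = br n c (x + y) (x + y)"
    using assms V_add by (simp add: is_lie_def)
  also have "\<dots> = br n c x y + br n c y x"
    using assms by (simp add: add_left add_right is_lie_def)
  finally show ?thesis by (simp add: eq_neg_iff_add_eq_0)
qed

lemma br_diff_left: "br n c (x - y) z = br n c x z - br n c y z"
  and br_diff_right: "br n c z (x - y) = br n c z x - br n c z y"
  by (auto simp: br_def fun_eq_iff sum_subtractf algebra_simps)

lemma ideal_br_left:
  assumes "is_lie n c" "is_ideal n c K" "x \<in> K" "y \<in> V n"
  shows "br n c x y \<in> K"
proof -
  have "x \<in> V n" "br n c y x \<in> K"
    using assms(2-4) by (auto simp: is_ideal_def)
  then show ?thesis
    using br_antisym[OF assms(1) _ assms(4)] assms(2)
      cv.subspace_neg[of K "br n c y x"] by (simp add: is_ideal_def csubspace_def)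
qed

lemma lcs_Suc_subset:
  assumes "\<And>x y. x \<in> V n \<Longrightarrow> y \<in> lcs n c k \<Longrightarrow> br n c x y \<in> W" "cv.subspace W"
  shows "lcs n c (Suc k) \<subseteq> W"
  unfolding lcs.simps cspan_def using assms by (intro cv.span_minimal) auto

lemma derivation_linear_V: "is_derivation n c f \<Longrightarrow> linear_V n f"
  unfolding is_derivation_def linear_V_def by blast

lemma is_derivation_zero: "is_derivation n c (\<lambda>x. 0)"
  unfolding is_derivation_def by (auto simp: V_def br_def fun_eq_iff)

lemma zero_in_dseq: "0 \<in> dseq n c k"
proof (induction k)
  case (Suc k)
  show ?case
    unfolding dseq.simps
    by (intro CollectI exI[of _ "\<lambda>x. 0"] exI[of _ 0])
      (simp add: is_derivation_zero fun_eq_iff Suc[unfolded zero_fun_def])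
qed (simp add: V_def)

lemma dseq_Suc_subset:
  "(\<And>g. is_derivation n c g \<Longrightarrow> g ` dseq n c k \<subseteq> S) \<Longrightarrow> dseq n c (Suc k) \<subseteq> S"
  by auto

definition is_centroid :: "nat \<Rightarrow> (nat \<Rightarrow> nat \<Rightarrow> nat \<Rightarrow> complex)
    \<Rightarrow> ((nat \<Rightarrow> complex) \<Rightarrow> (nat \<Rightarrow> complex)) \<Rightarrow> bool" where
  "is_centroid n c T \<longleftrightarrow> linear_V n T \<and>
     (\<forall>x\<in>V n. \<forall>y\<in>V n. T (br n c x y) = br n c (T x) y \<and> T (br n c x y) = br n c x (T y))"

definition proj_along :: "(nat \<Rightarrow> complex) set \<Rightarrow> (nat \<Rightarrow> complex) set
    \<Rightarrow> (nat \<Rightarrow> complex) \<Rightarrow> (nat \<Rightarrow> complex)" where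
  "proj_along I J u = (THE x. x \<in> I \<and> u - x \<in> J)"

locale ideal_decomposition =
  fixes n :: nat and c :: "nat \<Rightarrow> nat \<Rightarrow> nat \<Rightarrow> complex" and I J :: "(nat \<Rightarrow> complex) set"
  assumes lie: "is_lie n c" and ideal_I: "is_ideal n c I" and ideal_J: "is_ideal n c J"
    and inter: "I \<inter> J = {0}" and sum: "{x + y | x y. x \<in> I \<and> y \<in> J} = V n"
begin

lemma subspace_I: "cv.subspace I"
  and subspace_J: "cv.subspace J"
  and I_subset_V: "I \<subseteq> V n"
  and J_subset_V: "J \<subseteq> V n"
  using ideal_I ideal_J by (simp_all add: is_ideal_def csubspace_def)

lemma br_in_I: "x \<in> V n \<Longrightarrow> y \<in> I \<Longrightarrow> br n c x y \<in> I"
  and br_in_J: "x \<in> V n \<Longrightarrow> y \<in> J \<Longrightarrow> br n c x y \<in> J"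
  using ideal_I ideal_J by (simp_all add: is_ideal_def)

lemma br_in_I_left: "x \<in> I \<Longrightarrow> y \<in> V n \<Longrightarrow> br n c x y \<in> I"
  and br_in_J_left: "x \<in> J \<Longrightarrow> y \<in> V n \<Longrightarrow> br n c x y \<in> J"
  using ideal_br_left[OF lie ideal_I] ideal_br_left[OF lie ideal_J] by blast+

lemma component_unique:
  assumes "x \<in> I" "x' \<in> I" "u - x \<in> J" "u - x' \<in> J"
  shows "x = x'"
proof -
  have "x - x' \<in> I"
    using cv.subspace_diff[OF subspace_I assms(1,2)] .
  moreover have "x - x' \<in> J"
    using cv.subspace_diff[OF subspace_J assms(4,3)] by simp
  ultimately have "x - x' \<in> I \<inter> J"
    by blast
  then show ?thesis
    by (simp add: inter)
qed

lemma proj_along_mem: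
  assumes "u \<in> V n"
  shows "proj_along I J u \<in> I" "u - proj_along I J u \<in> J"
proof -
  obtain x y where "u = x + y" "x \<in> I" "y \<in> J"
    using assms sum by blast
  then have x: "x \<in> I \<and> u - x \<in> J" by simp
  have "proj_along I J u \<in> I \<and> u - proj_along I J u \<in> J"
    unfolding proj_along_def
    by (rule theI[of "\<lambda>x. x \<in> I \<and> u - x \<in> J", OF x]) (use x component_unique in blast)
  then show "proj_along I J u \<in> I" "u - proj_along I J u \<in> J" by auto
qed

lemma proj_along_eqI: "u \<in> V n \<Longrightarrow> x \<in> I \<Longrightarrow> u - x \<in> J \<Longrightarrow> proj_along I J u = x"
  using component_unique proj_along_mem by blast

lemma proj_along_I: "x \<in> I \<Longrightarrow> proj_along I J x = x"
  using I_subset_V cv.subspace_0[OF subspace_J] by (intro proj_along_eqI) auto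

lemma proj_along_J: "y \<in> J \<Longrightarrow> proj_along I J y = 0"
  using J_subset_V cv.subspace_0[OF subspace_I] by (intro proj_along_eqI) auto

lemma proj_along_idem: "u \<in> V n \<Longrightarrow> proj_along I J (proj_along I J u) = proj_along I J u"
  using proj_along_I proj_along_mem by blast

lemma linear_proj_along: "linear_V n (proj_along I J)"
  unfolding linear_V_def
proof (intro conjI ballI allI image_subsetI)
  fix u assume "u \<in> V n"
  then show "proj_along I J u \<in> V n"
    using proj_along_mem I_subset_V by blast
next
  fix x y a b assume xy: "x \<in> V n" "y \<in> V n"
  let ?p = "proj_along I J"
  show "?p (csc a x + csc b y) = csc a (?p x) + csc b (?p y)"
  proof (rule proj_along_eqI)
    show "csc a x + csc b y \<in> V n"
      using xy by (intro V_add V_csc)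
    show "csc a (?p x) + csc b (?p y) \<in> I"
      using xy proj_along_mem(1)
      by (intro cv.subspace_add[OF subspace_I] cv.subspace_scale[OF subspace_I]) auto
    have "csc a (x - ?p x) + csc b (y - ?p y) \<in> J"
      using xy proj_along_mem(2)
      by (intro cv.subspace_add[OF subspace_J] cv.subspace_scale[OF subspace_J]) auto
    moreover have "csc a (x - ?p x) + csc b (y - ?p y)
        = (csc a x + csc b y) - (csc a (?p x) + csc b (?p y))"
      by (simp add: fun_eq_iff algebra_simps)
    ultimately show "(csc a x + csc b y) - (csc a (?p x) + csc b (?p y)) \<in> J"
      by simp
  qed
qed

lemma centroid_proj_along: "is_centroid n c (proj_along I J)"
  unfolding is_centroid_def
proof (intro conjI ballI linear_proj_along)
  fix x y assume x: "x \<in> V n" and y: "y \<in> V n"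
  let ?p = "proj_along I J"
  show "?p (br n c x y) = br n c (?p x) y"
  proof (rule proj_along_eqI[OF br_in_V])
    show "br n c (?p x) y \<in> I"
      using br_in_I_left[OF proj_along_mem(1)[OF x] y] .
    show "br n c x y - br n c (?p x) y \<in> J"
      using br_in_J_left[OF proj_along_mem(2)[OF x] y] by (simp add: br_diff_left)
  qed
  show "?p (br n c x y) = br n c x (?p y)"
  proof (rule proj_along_eqI[OF br_in_V])
    show "br n c x (?p y) \<in> I"
      using br_in_I[OF x proj_along_mem(1)[OF y]] .
    show "br n c x y - br n c x (?p y) \<in> J"
      using br_in_J[OF x proj_along_mem(2)[OF y]] by (simp add: br_diff_right)
  qed
qed

end

section \<open>The algebras \<open>h\<^sub>d\<close>\<close>

text \<open>Basis of \<open>h\<^sub>d\<close>: \<open>a, b, c\<close> are the coordinates \<open>0, 1, 2\<close>, \<open>x\<^sub>i = e\<^bsub>3+i\<^esub>\<close>,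
  \<open>y\<^sub>j = e\<^bsub>3+d+j\<^esub>\<close> and \<open>z\<^sub>i\<^sub>j = e\<^bsub>3+2d+di+j\<^esub>\<close> for \<open>i, j < d\<close>.\<close>

definition hdim :: "nat \<Rightarrow> nat" where
  "hdim d = 3 + 2*d + d*d"

definition xI :: "nat \<Rightarrow> nat \<Rightarrow> nat" where
  "xI d i = 3 + i"

definition yI :: "nat \<Rightarrow> nat \<Rightarrow> nat" where
  "yI d j = 3 + d + j"

definition zI :: "nat \<Rightarrow> nat \<Rightarrow> nat \<Rightarrow> nat" where
  "zI d i j = 3 + 2*d + d*i + j"

text \<open>The bracket is the bilinear extension of \<open>[a, b] = c\<close>, \<open>[a, c] = z\<^sub>0\<^sub>0\<close>, \<open>[b, c] = z\<^sub>1\<^sub>1\<close>,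
  \<open>[x\<^sub>i, y\<^sub>j] = z\<^sub>i\<^sub>j\<close>, \<open>[a, x\<^sub>i] = z\<^sub>i\<^sub>i\<close>, \<open>[b, y\<^sub>j] = z\<^sub>j\<^sub>j\<close> (all other brackets of basis vectors vanish);
  \<open>hbr_z\<close> is its \<open>z\<^sub>p\<^sub>q\<close>-coordinate.\<close>
definition hbr_z :: "nat \<Rightarrow> (nat \<Rightarrow> complex) \<Rightarrow> (nat \<Rightarrow> complex) \<Rightarrow> nat \<Rightarrow> nat \<Rightarrow> complex" where
  "hbr_z d u v p q = u (xI d p) * v (yI d q) - u (yI d q) * v (xI d p)
     + (if p = q then u 0 * v (xI d p) - u (xI d p) * v 0 + u 1 * v (yI d p) - u (yI d p) * v 1 else 0)
     + (if p = 0 \<and> q = 0 then u 0 * v 2 - u 2 * v 0 else 0)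
     + (if p = 1 \<and> q = 1 then u 1 * v 2 - u 2 * v 1 else 0)"

definition hbr :: "nat \<Rightarrow> (nat \<Rightarrow> complex) \<Rightarrow> (nat \<Rightarrow> complex) \<Rightarrow> (nat \<Rightarrow> complex)" where
  "hbr d u v = (\<lambda>k. if k = 2 then u 0 * v 1 - u 1 * v 0
     else if 3 + 2*d \<le> k \<and> k < hdim d
       then hbr_z d u v ((k - (3 + 2*d)) div d) ((k - (3 + 2*d)) mod d) else 0)"

definition hsc :: "nat \<Rightarrow> nat \<Rightarrow> nat \<Rightarrow> nat \<Rightarrow> complex" where
  "hsc d i j k = hbr d (unit_vec i) (unit_vec j) k"

lemma index_neq [simp]:
  "xI d i \<noteq> 0" "xI d i \<noteq> 1" "xI d i \<noteq> 2" "yI d j \<noteq> 0" "yI d j \<noteq> 1" "yI d j \<noteq> 2"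
  "zI d p q \<noteq> 0" "zI d p q \<noteq> 1" "zI d p q \<noteq> 2"
  "0 \<noteq> xI d i" "1 \<noteq> xI d i" "2 \<noteq> xI d i" "0 \<noteq> yI d j" "1 \<noteq> yI d j" "2 \<noteq> yI d j"
  "0 \<noteq> zI d p q" "1 \<noteq> zI d p q" "2 \<noteq> zI d p q"
  "xI d i = xI d i' \<longleftrightarrow> i = i'" "yI d j = yI d j' \<longleftrightarrow> j = j'"
  by (auto simp: xI_def yI_def zI_def)

lemma index_neq_bounded [simp]:
  "i < d \<Longrightarrow> xI d i \<noteq> yI d j" "i < d \<Longrightarrow> yI d j \<noteq> xI d i"
  "i < d \<Longrightarrow> xI d i \<noteq> zI d p q" "i < d \<Longrightarrow> zI d p q \<noteq> xI d i"
  "j < d \<Longrightarrow> yI d j \<noteq> zI d p q" "j < d \<Longrightarrow> zI d p q \<noteq> yI d j"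
  by (auto simp: xI_def yI_def zI_def)

lemma zI_eq_iff [simp]:
  assumes "q < d" "q' < d"
  shows "zI d p q = zI d p' q' \<longleftrightarrow> p = p' \<and> q = q'"
proof -
  have "zI d p q = zI d p' q' \<longleftrightarrow> d*p + q = d*p' + q'"
    by (auto simp: zI_def)
  also have "\<dots> \<longleftrightarrow> p = p' \<and> q = q'"
  proof
    assume eq: "d*p + q = d*p' + q'"
    have "(d*p + q) div d = p" "(d*p' + q') div d = p'" "(d*p + q) mod d = q" "(d*p' + q') mod d = q'"
      using assms by auto
    then show "p = p' \<and> q = q'" using eq by metis
  qed auto
  finally show ?thesis .
qed

lemma xI_less_hdim: "i < d \<Longrightarrow> xI d i < hdim d"
  and yI_less_hdim: "j < d \<Longrightarrow> yI d j < hdim d"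
  by (simp_all add: xI_def yI_def hdim_def)

lemma zI_less_hdim:
  assumes "p < d" "q < d"
  shows "zI d p q < hdim d"
proof -
  have "d*p + q < d * Suc p" using assms by simp
  also have "\<dots> \<le> d*d" using assms by (intro mult_le_mono2) simp
  finally show ?thesis by (simp add: zI_def hdim_def)
qed

lemma low_index_cases:
  assumes "k < 3 + 2*d"
  obtains "k = 0" | "k = 1" | "k = 2" | i where "i < d" "k = xI d i" | j where "j < d" "k = yI d j"
proof -
  consider "k < 3" | "3 \<le> k" "k < 3 + d" | "3 + d \<le> k" by linarith
  then show ?thesis
  proof cases
    case 1 then show ?thesis using that(1-3) by linarith
  next
    case 2 then show ?thesis using that(4)[of "k - 3"] by (simp add: xI_def)
  next
    case 3 then show ?thesis using assms that(5)[of "k - 3 - d"] by (simp add: yI_def)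
  qed
qed

lemma index_cases:
  assumes "k < hdim d"
  obtains "k = 0" | "k = 1" | "k = 2" | i where "i < d" "k = xI d i" | j where "j < d" "k = yI d j"
    | p q where "p < d" "q < d" "k = zI d p q"
proof (cases "k < 3 + 2*d")
  case True then show ?thesis using that(1-5) by (elim low_index_cases)
next
  case False
  define r where "r = k - (3 + 2*d)"
  have r: "r < d*d" using False assms by (simp add: r_def hdim_def)
  then have "r div d < d" "r mod d < d"
    by (simp_all add: less_mult_imp_div_less) (metis mod_less_divisor mult_0_right neq0_conv not_less0)
  moreover have "k = zI d (r div d) (r mod d)"
    using False by (simp add: zI_def r_def)
  ultimately show ?thesis using that(6) by blast
qed

lemma ex_index_avoiding:
  assumes "3 \<le> (d::nat)"
  shows "\<exists>k<d. k \<noteq> a \<and> k \<noteq> b"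
proof -
  consider "0 \<noteq> a" "0 \<noteq> b" | "1 \<noteq> a" "1 \<noteq> b" | "2 \<noteq> a" "2 \<noteq> b" by arith
  then show ?thesis using assms by cases force+
qed

lemma hbr_apply_2 [simp]: "hbr d u v 2 = u 0 * v 1 - u 1 * v 0"
  by (simp add: hbr_def)

lemma hbr_apply_zI [simp]:
  assumes "p < d" "q < d"
  shows "hbr d u v (zI d p q) = hbr_z d u v p q"
proof -
  have "zI d p q - (3 + 2*d) = d*p + q" by (simp add: zI_def)
  then show ?thesis
    using assms zI_less_hdim[OF assms] by (simp add: hbr_def zI_def)
qed

lemma hbr_apply_generator [simp]:
  "hbr d u v 0 = 0" "hbr d u v 1 = 0"
  "i < d \<Longrightarrow> hbr d u v (xI d i) = 0" "j < d \<Longrightarrow> hbr d u v (yI d j) = 0"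
  by (auto simp: hbr_def xI_def yI_def)

lemma hbr_in_V: "hbr d u v \<in> V (hdim d)"
  by (simp add: V_def hbr_def hdim_def)

lemma hbr_combination_left: "hbr d (csc a x + csc b y) v = csc a (hbr d x v) + csc b (hbr d y v)"
  and hbr_combination_right: "hbr d v (csc a x + csc b y) = csc a (hbr d v x) + csc b (hbr d v y)"
  by (auto simp: fun_eq_iff hbr_def hbr_z_def algebra_simps)

lemma hbr_antisym: "hbr d u v = - hbr d v u"
  by (auto simp: fun_eq_iff hbr_def hbr_z_def algebra_simps)

lemma hbr_diff_left: "hbr d (u - v) w = hbr d u w - hbr d v w"
  and hbr_csc_left: "hbr d (csc a v) w = csc a (hbr d v w)"
  by (auto simp: fun_eq_iff hbr_def hbr_z_def algebra_simps)

lemma linear_V_hbr_left: "linear_V (hdim d) (\<lambda>u. hbr d u v)"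
  and linear_V_hbr_right: "linear_V (hdim d) (\<lambda>v. hbr d u v)"
  by (auto simp: linear_V_def hbr_in_V hbr_combination_left hbr_combination_right)

lemma br_hsc:
  assumes "u \<in> V (hdim d)" "v \<in> V (hdim d)"
  shows "br (hdim d) (hsc d) u v = hbr d u v"
proof
  fix k
  show "br (hdim d) (hsc d) u v k = hbr d u v k"
  proof (cases "k < hdim d")
    case True
    have "hbr d u v k = (\<Sum>i<hdim d. u i * hbr d (unit_vec i) v k)"
      by (simp add: linear_V_expand[OF linear_V_hbr_left assms(1)] sum_apply)
    also have "\<dots> = (\<Sum>i<hdim d. \<Sum>j<hdim d. u i * v j * hsc d i j k)"
      by (simp add: linear_V_expand[OF linear_V_hbr_right assms(2)] sum_apply
          sum_distrib_left mult.assoc hsc_def)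
    finally show ?thesis using True by (simp add: br_def)
  next
    case False
    then show ?thesis using hbr_in_V[of d u v] by (simp add: br_def V_def)
  qed
qed

lemma hvec_eqI:
  assumes "u \<in> V (hdim d)" "v \<in> V (hdim d)" "u 0 = v 0" "u 1 = v 1" "u 2 = v 2"
    "\<And>i. i < d \<Longrightarrow> u (xI d i) = v (xI d i)" "\<And>j. j < d \<Longrightarrow> u (yI d j) = v (yI d j)"
    "\<And>p q. p < d \<Longrightarrow> q < d \<Longrightarrow> u (zI d p q) = v (zI d p q)"
  shows "u = v"
proof
  fix k
  show "u k = v k"
  proof (cases "k < hdim d")
    case True then show ?thesis using assms(3-) by (elim index_cases) auto
  next
    case False then show ?thesis using assms(1,2) by (simp add: V_def)
  qed
qed

lemma unit_vec_in_V_hdim [simp]: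
  "unit_vec 0 \<in> V (hdim d)" "unit_vec 1 \<in> V (hdim d)"
  "unit_vec 2 \<in> V (hdim d)"
  "i < d \<Longrightarrow> unit_vec (xI d i) \<in> V (hdim d)" "j < d \<Longrightarrow> unit_vec (yI d j) \<in> V (hdim d)"
  "p < d \<Longrightarrow> q < d \<Longrightarrow> unit_vec (zI d p q) \<in> V (hdim d)"
  by (simp_all add: unit_vec_in_V xI_less_hdim yI_less_hdim zI_less_hdim) (simp_all add: V_def hdim_def)

lemma hbr_basis [simp]:
  "i < d \<Longrightarrow> k < d \<Longrightarrow> hbr d (unit_vec (xI d i)) (unit_vec (xI d k)) = 0"
  "j < d \<Longrightarrow> l < d \<Longrightarrow> hbr d (unit_vec (yI d j)) (unit_vec (yI d l)) = 0"
  "i < d \<Longrightarrow> j < d \<Longrightarrow> hbr d (unit_vec (xI d i)) (unit_vec (yI d j)) = unit_vec (zI d i j)"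
  "i < d \<Longrightarrow> hbr d (unit_vec 0) (unit_vec (xI d i)) = unit_vec (zI d i i)"
  "j < d \<Longrightarrow> hbr d (unit_vec 0) (unit_vec (yI d j)) = 0"
  "i < d \<Longrightarrow> hbr d (unit_vec 1) (unit_vec (xI d i)) = 0"
  "j < d \<Longrightarrow> hbr d (unit_vec 1) (unit_vec (yI d j)) = unit_vec (zI d j j)"
  "hbr d (unit_vec 0) (unit_vec 1) = unit_vec 2"
  "0 < d \<Longrightarrow> hbr d (unit_vec 0) (unit_vec 2) = unit_vec (zI d 0 0)"
  "1 < d \<Longrightarrow> hbr d (unit_vec 1) (unit_vec 2) = unit_vec (zI d 1 1)"
  by (rule hvec_eqI[of _ d]; auto simp: hbr_in_V V_zero hbr_z_def)+

definition hderived :: "nat \<Rightarrow> (nat \<Rightarrow> complex) set" where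
  "hderived d = {v \<in> V (hdim d). v 0 = 0 \<and> v 1 = 0 \<and> (\<forall>i<d. v (xI d i) = 0 \<and> v (yI d i) = 0)}"

definition hcenter :: "nat \<Rightarrow> (nat \<Rightarrow> complex) set" where
  "hcenter d = {v \<in> hderived d. v 2 = 0}"

lemma hderived_subset_V: "hderived d \<subseteq> V (hdim d)"
  and hcenter_subset_hderived: "hcenter d \<subseteq> hderived d"
  by (auto simp: hderived_def hcenter_def)

lemma subspace_hderived: "cv.subspace (hderived d)"
  and subspace_hcenter: "cv.subspace (hcenter d)"
  by (auto simp: cv.subspace_def hderived_def hcenter_def intro: V_add V_csc V_zero)

lemma hbr_in_hderived: "hbr d u v \<in> hderived d"
  by (simp add: hderived_def hbr_in_V)

lemma hbr_hderived_right:
  assumes "2 \<le> d" "s \<in> hderived d"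
  shows "hbr d u s = csc (u 0 * s 2) (unit_vec (zI d 0 0)) + csc (u 1 * s 2) (unit_vec (zI d 1 1))"
proof (rule hvec_eqI[of _ d])
  show "csc (u 0 * s 2) (unit_vec (zI d 0 0)) + csc (u 1 * s 2) (unit_vec (zI d 1 1)) \<in> V (hdim d)"
    using assms by (intro V_add V_csc) simp_all
qed (use assms in \<open>auto simp: hbr_in_V hbr_z_def hderived_def\<close>)

lemma hbr_hderived_left:
  assumes "2 \<le> d" "s \<in> hderived d"
  shows "hbr d s u = csc (- u 0 * s 2) (unit_vec (zI d 0 0)) + csc (- u 1 * s 2) (unit_vec (zI d 1 1))"
  using hbr_hderived_right[OF assms, of u] hbr_antisym[of d s u] by (auto simp: fun_eq_iff)

lemma z00_z11_combination_in_hcenter: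
  "2 \<le> d \<Longrightarrow> csc \<alpha> (unit_vec (zI d 0 0)) + csc \<beta> (unit_vec (zI d 1 1)) \<in> hcenter d"
  by (auto simp: hcenter_def hderived_def intro!: V_add V_csc)

lemma hbr_hderived_in_hcenter:
  assumes "2 \<le> d" "s \<in> hderived d"
  shows "hbr d u s \<in> hcenter d" "hbr d s u \<in> hcenter d"
  unfolding hbr_hderived_right[OF assms] hbr_hderived_left[OF assms]
  using z00_z11_combination_in_hcenter[OF assms(1)] by blast+

lemma hbr_hcenter:
  assumes "2 \<le> d" "s \<in> hcenter d"
  shows "hbr d u s = 0" "hbr d s u = 0"
  using assms hcenter_subset_hderived
  by (auto simp: hbr_hderived_right hbr_hderived_left hcenter_def fun_eq_iff)

lemma is_lie_h:
  assumes "2 \<le> d"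
  shows "is_lie (hdim d) (hsc d)"
  unfolding is_lie_def
proof (intro conjI ballI)
  fix x assume "x \<in> V (hdim d)"
  then show "br (hdim d) (hsc d) x x = 0"
    using hbr_antisym[of d x x] by (simp add: br_hsc fun_eq_iff)
next
  fix x y z assume xyz: "x \<in> V (hdim d)" "y \<in> V (hdim d)" "z \<in> V (hdim d)"
  have "hbr d x (hbr d y z) + hbr d y (hbr d z x) + hbr d z (hbr d x y) = 0"
    by (simp add: hbr_hderived_right[OF assms hbr_in_hderived] fun_eq_iff algebra_simps)
  then show "br (hdim d) (hsc d) x (br (hdim d) (hsc d) y z)
      + br (hdim d) (hsc d) y (br (hdim d) (hsc d) z x)
      + br (hdim d) (hsc d) z (br (hdim d) (hsc d) x y) = 0"
    using xyz by (simp add: br_hsc hbr_in_V)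
qed

lemma center_h:
  assumes "2 \<le> d"
  shows "center (hdim d) (hsc d) = hcenter d"
proof
  show "hcenter d \<subseteq> center (hdim d) (hsc d)"
    using hcenter_subset_hderived hderived_subset_V hbr_hcenter(2)[OF assms]
    by (fastforce simp: center_def br_hsc)
next
  show "center (hdim d) (hsc d) \<subseteq> hcenter d"
  proof
    fix x assume x: "x \<in> center (hdim d) (hsc d)"
    then have xV: "x \<in> V (hdim d)" by (simp add: center_def)
    have ann: "hbr d x v = 0" if "v \<in> V (hdim d)" for v
      using x that br_hsc[OF xV that] by (simp add: center_def)
    have "hbr d x (unit_vec 1) 2 = 0" "hbr d x (unit_vec 0) 2 = 0"
      using ann by simp_all
    then have x01: "x 0 = 0" "x 1 = 0" by simp_all
    have "x (xI d i) = 0" "x (yI d i) = 0" if "i < d" for i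
      using fun_cong[OF ann[of "unit_vec (yI d i)"], of "zI d i i"]
        fun_cong[OF ann[of "unit_vec (xI d i)"], of "zI d i i"] that x01
      by (simp_all add: hbr_z_def split: if_splits)
    moreover have "x 2 = 0"
      using fun_cong[OF ann[of "unit_vec 0"], of "zI d 0 0"] assms x01 calculation
      by (simp add: hbr_z_def)
    ultimately show "x \<in> hcenter d"
      using xV x01 by (simp add: hcenter_def hderived_def)
  qed
qed

lemma hcenter_eq_coordinate_subspace:
  "hcenter d = {v. \<forall>k. k \<notin> {3 + 2*d..<hdim d} \<longrightarrow> v k = 0}"
proof -
  have "v \<in> hcenter d \<longleftrightarrow> v \<in> V (hdim d) \<and> (\<forall>k<3 + 2*d. v k = 0)" for v
  proof
    assume "v \<in> hcenter d"
    then show "v \<in> V (hdim d) \<and> (\<forall>k<3 + 2*d. v k = 0)"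
      by (auto simp: hcenter_def hderived_def elim: low_index_cases)
  next
    assume "v \<in> V (hdim d) \<and> (\<forall>k<3 + 2*d. v k = 0)"
    then show "v \<in> hcenter d"
      by (auto simp: hcenter_def hderived_def xI_def yI_def)
  qed
  then show ?thesis
    by (auto simp: V_def)
qed

lemma cdim_center_h:
  assumes "2 \<le> d"
  shows "cdim (center (hdim d) (hsc d)) = d * d"
proof -
  have "cdim (hcenter d) = card {3 + 2*d..<hdim d}"
    unfolding hcenter_eq_coordinate_subspace by (rule cdim_coordinate_subspace) simp
  also have "\<dots> = d * d"
    by (simp add: hdim_def)
  finally show ?thesis
    by (simp only: center_h[OF assms])
qed

definition lowers_filtration :: "nat \<Rightarrow> ((nat \<Rightarrow> complex) \<Rightarrow> (nat \<Rightarrow> complex)) \<Rightarrow> bool" where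
  "lowers_filtration d g \<longleftrightarrow>
     g ` V (hdim d) \<subseteq> hderived d \<and> g ` hderived d \<subseteq> hcenter d \<and> g ` hcenter d \<subseteq> {0}"

lemma lowers_filtration_cube:
  assumes "lowers_filtration d g" "u \<in> V (hdim d)"
  shows "g (g (g u)) = 0"
  using assms by (auto simp: lowers_filtration_def)

lemma lowers_filtrationI:
  assumes g: "linear_V (hdim d) g"
    and g01: "g (unit_vec 0) \<in> hderived d" "g (unit_vec 1) \<in> hderived d"
    and gxy: "\<And>i. i < d \<Longrightarrow> g (unit_vec (xI d i)) \<in> hderived d"
      "\<And>j. j < d \<Longrightarrow> g (unit_vec (yI d j)) \<in> hderived d"
    and g2: "g (unit_vec 2) \<in> hcenter d"
    and gz: "\<And>p q. p < d \<Longrightarrow> q < d \<Longrightarrow> g (unit_vec (zI d p q)) = 0"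
  shows "lowers_filtration d g"
  unfolding lowers_filtration_def
proof (intro conjI image_subsetI)
  fix u assume "u \<in> V (hdim d)"
  then show "g u \<in> hderived d"
  proof (rule linear_V_in_subspace[OF g subspace_hderived])
    fix k assume k: "k < hdim d"
    show "g (unit_vec k) \<in> hderived d"
      by (rule index_cases[OF k])
        (use g01 gxy g2 gz subsetD[OF hcenter_subset_hderived]
          cv.subspace_0[OF subspace_hderived] in auto)
  qed
next
  fix u assume u: "u \<in> hderived d"
  then have "u \<in> V (hdim d)" using hderived_subset_V by blast
  then show "g u \<in> hcenter d"
  proof (rule linear_V_in_subspace[OF g subspace_hcenter])
    fix k assume k: "k < hdim d" and uk: "u k \<noteq> 0"
    show "g (unit_vec k) \<in> hcenter d"
      by (rule index_cases[OF k])
        (use uk u g2 gz cv.subspace_0[OF subspace_hcenter] in \<open>simp_all add: hderived_def\<close>)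
  qed
next
  fix u assume u: "u \<in> hcenter d"
  then have "u \<in> V (hdim d)" using hcenter_subset_hderived hderived_subset_V by blast
  then show "g u \<in> {0}"
  proof (rule linear_V_in_subspace[OF g cv.subspace_single_0])
    fix k assume k: "k < hdim d" and uk: "u k \<noteq> 0"
    show "g (unit_vec k) \<in> {0}"
      by (rule index_cases[OF k])
        (use uk u gz in \<open>simp_all add: hcenter_def hderived_def\<close>)
  qed
qed

lemma nilpotent_h:
  assumes "2 \<le> d"
  shows "nilpotent_lie (hdim d) (hsc d)"
proof -
  have lcs1: "lcs (hdim d) (hsc d) 1 \<subseteq> hderived d"
    unfolding One_nat_def
    by (rule lcs_Suc_subset[OF _ subspace_hderived]) (simp add: br_hsc hbr_in_hderived)
  have lcs2: "lcs (hdim d) (hsc d) (Suc 1) \<subseteq> hcenter d"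
  proof (rule lcs_Suc_subset[OF _ subspace_hcenter])
    fix x y assume x: "x \<in> V (hdim d)" and "y \<in> lcs (hdim d) (hsc d) 1"
    then have y: "y \<in> hderived d" using lcs1 by blast
    then have "y \<in> V (hdim d)" using hderived_subset_V by blast
    then show "br (hdim d) (hsc d) x y \<in> hcenter d"
      using x by (simp add: br_hsc hbr_hderived_in_hcenter[OF assms y])
  qed
  have "lcs (hdim d) (hsc d) (Suc (Suc 1)) \<subseteq> {0}"
  proof (rule lcs_Suc_subset[OF _ cv.subspace_single_0])
    fix x y assume x: "x \<in> V (hdim d)" and "y \<in> lcs (hdim d) (hsc d) (Suc 1)"
    then have y: "y \<in> hcenter d" using lcs2 by blast
    then have "y \<in> V (hdim d)" using hcenter_subset_hderived hderived_subset_V by blast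
    then show "br (hdim d) (hsc d) x y \<in> {0}"
      using x by (simp add: br_hsc hbr_hcenter[OF assms y])
  qed
  moreover have "0 \<in> lcs (hdim d) (hsc d) (Suc (Suc 1))"
    unfolding lcs.simps cspan_def by (rule cv.span_zero)
  ultimately show ?thesis
    unfolding nilpotent_lie_def by blast
qed

section \<open>Derivations of \<open>h\<^sub>d\<close>\<close>

text \<open>Each coordinate identity below is a \<open>z\<^sub>p\<^sub>q\<close>-coordinate of the Leibniz rule for a pair of
  basis vectors; \<open>d \<ge> 3\<close> supplies an index distinct from two given ones.\<close>

locale h_derivation =
  fixes d :: nat and f :: "(nat \<Rightarrow> complex) \<Rightarrow> (nat \<Rightarrow> complex)"
  assumes three_le_d: "3 \<le> d" and derivation: "is_derivation (hdim d) (hsc d) f"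
begin

lemma linear: "linear_V (hdim d) f"
  using derivation by (rule derivation_linear_V)

lemma leibniz:
  assumes "x \<in> V (hdim d)" "y \<in> V (hdim d)"
  shows "f (hbr d x y) = hbr d (f x) y + hbr d x (f y)"
  using derivation assms linear_V_in_V[OF linear]
  by (simp add: is_derivation_def br_hsc[symmetric])

lemma leibniz_at:
  assumes "x \<in> V (hdim d)" "y \<in> V (hdim d)"
  shows "f (hbr d x y) k = hbr d (f x) y k + hbr d x (f y) k"
  using leibniz[OF assms] by simp

lemma zero: "f 0 = 0"
  using linear by (rule linear_V_zero)

lemma x_at_y:
  assumes "i < d" "q < d"
  shows "f (unit_vec (xI d i)) (yI d q) = 0"
proof -
  obtain k where "k < d" "k \<noteq> i" "k \<noteq> q"
    using ex_index_avoiding[OF three_le_d] by blast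
  then show ?thesis
    using leibniz_at[of "unit_vec (xI d i)" "unit_vec (xI d k)" "zI d k q"] assms
    by (simp add: zero hbr_z_def split: if_splits)
qed

lemma x_at_0:
  assumes "i < d"
  shows "f (unit_vec (xI d i)) 0 = 0"
proof -
  obtain k where "k < d" "k \<noteq> i"
    using ex_index_avoiding[OF three_le_d] by blast
  then show ?thesis
    using leibniz_at[of "unit_vec (xI d i)" "unit_vec (xI d k)" "zI d k k"] assms x_at_y[of i k]
    by (simp add: zero hbr_z_def split: if_splits)
qed

lemma y_at_x:
  assumes "j < d" "p < d"
  shows "f (unit_vec (yI d j)) (xI d p) = 0"
proof -
  obtain l where "l < d" "l \<noteq> j" "l \<noteq> p"
    using ex_index_avoiding[OF three_le_d] by blast
  then show ?thesis
    using leibniz_at[of "unit_vec (yI d j)" "unit_vec (yI d l)" "zI d p l"] assms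
    by (simp add: zero hbr_z_def split: if_splits)
qed

lemma y_at_1:
  assumes "j < d"
  shows "f (unit_vec (yI d j)) 1 = 0"
proof -
  obtain l where "l < d" "l \<noteq> j"
    using ex_index_avoiding[OF three_le_d] by blast
  then show ?thesis
    using leibniz_at[of "unit_vec (yI d j)" "unit_vec (yI d l)" "zI d l l"] assms y_at_x[of j l]
    by (simp add: zero hbr_z_def split: if_splits)
qed

lemma a_at_x:
  assumes "p < d"
  shows "f (unit_vec 0) (xI d p) = 0"
proof -
  obtain j where "j < d" "j \<noteq> p"
    using ex_index_avoiding[OF three_le_d] by blast
  then show ?thesis
    using leibniz_at[of "unit_vec 0" "unit_vec (yI d j)" "zI d p j"] assms
    by (simp add: zero hbr_z_def split: if_splits)
qed

lemma a_at_1: "f (unit_vec 0) 1 = 0"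
  using leibniz_at[of "unit_vec 0" "unit_vec (yI d 1)" "zI d 1 1"] three_le_d
    a_at_x[of 1] y_at_x[of 1 1]
  by (simp add: zero hbr_z_def split: if_splits)

lemma b_at_y:
  assumes "q < d"
  shows "f (unit_vec 1) (yI d q) = 0"
proof -
  obtain i where "i < d" "i \<noteq> q"
    using ex_index_avoiding[OF three_le_d] by blast
  then show ?thesis
    using leibniz_at[of "unit_vec 1" "unit_vec (xI d i)" "zI d i q"] assms
    by (simp add: zero hbr_z_def split: if_splits)
qed

lemma b_at_0: "f (unit_vec 1) 0 = 0"
  using leibniz_at[of "unit_vec 1" "unit_vec (xI d 0)" "zI d 0 0"] three_le_d
    x_at_y[of 0 0] b_at_y[of 0]
  by (simp add: zero hbr_z_def split: if_splits)

lemma x0_at_2: "f (unit_vec (xI d 0)) 2 = 0"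
  using leibniz_at[of "unit_vec 1" "unit_vec (xI d 0)" "zI d 1 1"] three_le_d x_at_y[of 0 1]
  by (simp add: zero hbr_z_def split: if_splits)

lemma y1_at_2: "f (unit_vec (yI d 1)) 2 = 0"
  using leibniz_at[of "unit_vec 0" "unit_vec (yI d 1)" "zI d 0 0"] three_le_d y_at_x[of 1 0]
  by (simp add: zero hbr_z_def split: if_splits)

text \<open>Since \<open>z\<^sub>i\<^sub>i = [a, x\<^sub>i] = [x\<^sub>i, y\<^sub>i] = [b, y\<^sub>i]\<close>, the Leibniz rule gives competing expressions
  for \<open>f z\<^sub>i\<^sub>i\<close>.\<close>

lemma leibniz_zdiag_a:
  assumes "i < d"
  shows "hbr d (f (unit_vec 0)) (unit_vec (xI d i)) + hbr d (unit_vec 0) (f (unit_vec (xI d i)))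
    = hbr d (f (unit_vec (xI d i))) (unit_vec (yI d i))
      + hbr d (unit_vec (xI d i)) (f (unit_vec (yI d i)))"
  using leibniz[of "unit_vec 0" "unit_vec (xI d i)"]
    leibniz[of "unit_vec (xI d i)" "unit_vec (yI d i)"] assms
  by simp

lemma leibniz_zdiag_b:
  assumes "j < d"
  shows "hbr d (f (unit_vec 1)) (unit_vec (yI d j)) + hbr d (unit_vec 1) (f (unit_vec (yI d j)))
    = hbr d (f (unit_vec (xI d j))) (unit_vec (yI d j))
      + hbr d (unit_vec (xI d j)) (f (unit_vec (yI d j)))"
  using leibniz[of "unit_vec 1" "unit_vec (yI d j)"]
    leibniz[of "unit_vec (xI d j)" "unit_vec (yI d j)"] assms
  by simp

lemma x_at_1: "i < d \<Longrightarrow> f (unit_vec (xI d i)) 1 = 0"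
  using fun_cong[OF leibniz_zdiag_a, of i 2] by simp

lemma y_at_0: "j < d \<Longrightarrow> f (unit_vec (yI d j)) 0 = 0"
  using fun_cong[OF leibniz_zdiag_b, of j 2] by simp

lemma x_at_x_off_diagonal:
  "i < d \<Longrightarrow> p < d \<Longrightarrow> p \<noteq> i \<Longrightarrow> f (unit_vec (xI d i)) (xI d p) = 0"
  using fun_cong[OF leibniz_zdiag_a, of i "zI d p i"] by (simp add: hbr_z_def split: if_splits)

lemma y_at_y_off_diagonal:
  "j < d \<Longrightarrow> q < d \<Longrightarrow> q \<noteq> j \<Longrightarrow> f (unit_vec (yI d j)) (yI d q) = 0"
  using fun_cong[OF leibniz_zdiag_b, of j "zI d j q"] by (simp add: hbr_z_def split: if_splits)

lemma a_at_y:
  assumes "q < d"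
  shows "f (unit_vec 0) (yI d q) = 0"
proof -
  obtain i where i: "i < d" "i \<noteq> q"
    using ex_index_avoiding[OF three_le_d] by blast
  have "f (unit_vec (yI d i)) (yI d q) = - f (unit_vec 0) (yI d q)"
    using fun_cong[OF leibniz_zdiag_a, of i "zI d i q"] i assms by (simp add: hbr_z_def split: if_splits)
  then show ?thesis
    using y_at_y_off_diagonal[of i q] i assms by simp
qed

lemma b_at_x:
  assumes "p < d"
  shows "f (unit_vec 1) (xI d p) = 0"
proof -
  obtain j where j: "j < d" "j \<noteq> p"
    using ex_index_avoiding[OF three_le_d] by blast
  have "f (unit_vec 1) (xI d p) = f (unit_vec (xI d j)) (xI d p)"
    using fun_cong[OF leibniz_zdiag_b, of j "zI d p j"] j assms by (simp add: hbr_z_def split: if_splits)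
  then show ?thesis
    using x_at_x_off_diagonal[of j p] j assms by simp
qed

lemma y_diagonal: "i < d \<Longrightarrow> f (unit_vec (yI d i)) (yI d i) = f (unit_vec 0) 0"
  using fun_cong[OF leibniz_zdiag_a, of i "zI d i i"] a_at_y[of i] x_at_1[of i] y_at_0[of i] x0_at_2
  by (cases "i = 0") (simp_all add: hbr_z_def split: if_splits)

lemma x_diagonal: "j < d \<Longrightarrow> f (unit_vec (xI d j)) (xI d j) = f (unit_vec 1) 1"
  using fun_cong[OF leibniz_zdiag_b, of j "zI d j j"] b_at_x[of j] x_at_1[of j] y_at_0[of j] y1_at_2
  by (cases "j = 1") (simp_all add: hbr_z_def split: if_splits)

lemma c_image:
  "f (unit_vec 2) = hbr d (f (unit_vec 0)) (unit_vec 1) + hbr d (unit_vec 0) (f (unit_vec 1))"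
  using leibniz[of "unit_vec 0" "unit_vec 1"] by simp

lemma c_at_2: "f (unit_vec 2) 2 = f (unit_vec 0) 0 + f (unit_vec 1) 1"
  using a_at_1 b_at_0 by (simp add: c_image)

lemma z_diagonal: "i < d \<Longrightarrow> f (unit_vec (zI d i i)) (zI d i i) = f (unit_vec 0) 0 + f (unit_vec 1) 1"
  using leibniz_at[of "unit_vec (xI d i)" "unit_vec (yI d i)" "zI d i i"]
    x_diagonal[of i] y_diagonal[of i] x_at_1[of i] y_at_0[of i]
  by (simp add: hbr_z_def)

lemma a_at_0: "f (unit_vec 0) 0 = 0"
  using leibniz_at[of "unit_vec 0" "unit_vec 2" "zI d 0 0"] three_le_d z_diagonal[of 0] c_at_2
  by (simp add: hbr_z_def c_image)

lemma b_at_1: "f (unit_vec 1) 1 = 0"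
  using leibniz_at[of "unit_vec 1" "unit_vec 2" "zI d 1 1"] three_le_d z_diagonal[of 1] c_at_2
  by (simp add: hbr_z_def c_image)

lemma x_at_x: "i < d \<Longrightarrow> p < d \<Longrightarrow> f (unit_vec (xI d i)) (xI d p) = 0"
  using x_at_x_off_diagonal x_diagonal b_at_1 by (cases "p = i") auto

lemma y_at_y: "j < d \<Longrightarrow> q < d \<Longrightarrow> f (unit_vec (yI d j)) (yI d q) = 0"
  using y_at_y_off_diagonal y_diagonal a_at_0 by (cases "q = j") auto

lemma generator_images_in_hderived:
  "f (unit_vec 0) \<in> hderived d" "f (unit_vec 1) \<in> hderived d"
  "i < d \<Longrightarrow> f (unit_vec (xI d i)) \<in> hderived d" "j < d \<Longrightarrow> f (unit_vec (yI d j)) \<in> hderived d"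
  using linear_V_in_V[OF linear]
  by (auto simp: hderived_def a_at_0 a_at_1 a_at_x a_at_y b_at_0 b_at_1 b_at_x b_at_y
      x_at_0 x_at_1 x_at_x x_at_y y_at_0 y_at_1 y_at_x y_at_y)

lemma c_image_in_hcenter: "f (unit_vec 2) \<in> hcenter d"
  unfolding c_image using three_le_d generator_images_in_hderived
  by (intro cv.subspace_add[OF subspace_hcenter] hbr_hderived_in_hcenter) auto

lemma z_image: "p < d \<Longrightarrow> q < d \<Longrightarrow> f (unit_vec (zI d p q)) = 0"
  using leibniz[of "unit_vec (xI d p)" "unit_vec (yI d q)"] three_le_d generator_images_in_hderived
  by (simp add: hbr_hderived_left hbr_hderived_right fun_eq_iff)

lemma lowers_filtration: "lowers_filtration d f"
  by (rule lowers_filtrationI[OF linear generator_images_in_hderived c_image_in_hcenter z_image])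

end

lemma dseq_3_eq_0_if_derivations_lower:
  assumes "\<And>g. is_derivation (hdim d) (hsc d) g \<Longrightarrow> lowers_filtration d g"
  shows "dseq (hdim d) (hsc d) 3 = {0}"
proof -
  have "dseq (hdim d) (hsc d) (Suc 0) \<subseteq> hderived d"
    by (rule dseq_Suc_subset) (use assms in \<open>simp add: lowers_filtration_def\<close>)
  then have "dseq (hdim d) (hsc d) (Suc (Suc 0)) \<subseteq> hcenter d"
    by (intro dseq_Suc_subset) (use assms image_mono in \<open>blast dest: lowers_filtration_def[THEN iffD1]\<close>)
  then have "dseq (hdim d) (hsc d) (Suc (Suc (Suc 0))) \<subseteq> {0}"
    by (intro dseq_Suc_subset) (use assms image_mono in \<open>blast dest: lowers_filtration_def[THEN iffD1]\<close>)
  then show ?thesis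
    using zero_in_dseq[of "hdim d" "hsc d" 3] unfolding numeral_3_eq_3 by blast
qed

lemma char_nilpotent_h:
  assumes "3 \<le> d"
  shows "char_nilpotent (hdim d) (hsc d)"
proof -
  have "dseq (hdim d) (hsc d) 3 = {0}"
    using assms by (intro dseq_3_eq_0_if_derivations_lower h_derivation.lowers_filtration) unfold_locales
  then show ?thesis
    using nilpotent_h assms unfolding char_nilpotent_def by (intro conjI exI[of _ 3]) auto
qed

section \<open>The centroid of \<open>h\<^sub>d\<close>\<close>

text \<open>As for derivations, the identities below are \<open>z\<^sub>p\<^sub>q\<close>-coordinates of
  \<open>T [u, v] = [T u, v] = [u, T v]\<close> for basis vectors \<open>u, v\<close>.\<close>

locale h_centroid =
  fixes d :: nat and T :: "(nat \<Rightarrow> complex) \<Rightarrow> (nat \<Rightarrow> complex)"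
  assumes three_le_d: "3 \<le> d" and centroid: "is_centroid (hdim d) (hsc d) T"
begin

lemma linear: "linear_V (hdim d) T"
  using centroid by (simp add: is_centroid_def)

lemma zero: "T 0 = 0"
  using linear by (rule linear_V_zero)

lemma commute_left: "x \<in> V (hdim d) \<Longrightarrow> y \<in> V (hdim d) \<Longrightarrow> T (hbr d x y) = hbr d (T x) y"
  and commute_right: "x \<in> V (hdim d) \<Longrightarrow> y \<in> V (hdim d) \<Longrightarrow> T (hbr d x y) = hbr d x (T y)"
  using centroid linear_V_in_V[OF linear] unfolding is_centroid_def by (metis br_hsc)+

definition scalar :: complex where
  "scalar = T (unit_vec (xI d 0)) (xI d 0)"

lemma x_at_y:
  assumes "i < d" "q < d"
  shows "T (unit_vec (xI d i)) (yI d q) = 0"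
proof -
  obtain k where "k < d" "k \<noteq> q"
    using ex_index_avoiding[OF three_le_d] by blast
  then show ?thesis
    using fun_cong[OF commute_left[of "unit_vec (xI d i)" "unit_vec (xI d k)"], of "zI d k q"] assms
    by (simp add: zero hbr_z_def split: if_splits)
qed

lemma x_at_0: "i < d \<Longrightarrow> T (unit_vec (xI d i)) 0 = 0"
  using fun_cong[OF commute_left[of "unit_vec (xI d i)" "unit_vec (xI d i)"], of "zI d i i"] x_at_y[of i i]
  by (simp add: zero hbr_z_def split: if_splits)

lemma y_at_x:
  assumes "j < d" "p < d"
  shows "T (unit_vec (yI d j)) (xI d p) = 0"
proof -
  obtain l where "l < d" "l \<noteq> p"
    using ex_index_avoiding[OF three_le_d] by blast
  then show ?thesis
    using fun_cong[OF commute_left[of "unit_vec (yI d j)" "unit_vec (yI d l)"], of "zI d p l"] assms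
    by (simp add: zero hbr_z_def split: if_splits)
qed

lemma y_at_1: "j < d \<Longrightarrow> T (unit_vec (yI d j)) 1 = 0"
  using fun_cong[OF commute_left[of "unit_vec (yI d j)" "unit_vec (yI d j)"], of "zI d j j"] y_at_x[of j j]
  by (simp add: zero hbr_z_def split: if_splits)

lemma a_at_x:
  assumes "p < d"
  shows "T (unit_vec 0) (xI d p) = 0"
proof -
  obtain j where "j < d" "j \<noteq> p"
    using ex_index_avoiding[OF three_le_d] by blast
  then show ?thesis
    using fun_cong[OF commute_left[of "unit_vec 0" "unit_vec (yI d j)"], of "zI d p j"] assms
    by (simp add: zero hbr_z_def split: if_splits)
qed

lemma a_at_1: "T (unit_vec 0) 1 = 0"
  using fun_cong[OF commute_left[of "unit_vec 0" "unit_vec (yI d 1)"], of "zI d 1 1"] three_le_d a_at_x[of 1]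
  by (simp add: zero hbr_z_def split: if_splits)

lemma b_at_y:
  assumes "q < d"
  shows "T (unit_vec 1) (yI d q) = 0"
proof -
  obtain i where "i < d" "i \<noteq> q"
    using ex_index_avoiding[OF three_le_d] by blast
  then show ?thesis
    using fun_cong[OF commute_left[of "unit_vec 1" "unit_vec (xI d i)"], of "zI d i q"] assms
    by (simp add: zero hbr_z_def split: if_splits)
qed

lemma b_at_0: "T (unit_vec 1) 0 = 0"
  using fun_cong[OF commute_left[of "unit_vec 1" "unit_vec (xI d 0)"], of "zI d 0 0"] three_le_d b_at_y[of 0]
  by (simp add: zero hbr_z_def split: if_splits)

lemma x_y_balance:
  "i < d \<Longrightarrow> j < d \<Longrightarrow> hbr d (T (unit_vec (xI d i))) (unit_vec (yI d j))
    = hbr d (unit_vec (xI d i)) (T (unit_vec (yI d j)))"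
  using commute_left[of "unit_vec (xI d i)" "unit_vec (yI d j)"]
    commute_right[of "unit_vec (xI d i)" "unit_vec (yI d j)"]
  by simp

lemma x_at_x_off_diagonal:
  assumes "i < d" "p < d" "p \<noteq> i"
  shows "T (unit_vec (xI d i)) (xI d p) = 0"
proof -
  obtain j where "j < d" "j \<noteq> p"
    using ex_index_avoiding[OF three_le_d] by blast
  then show ?thesis
    using fun_cong[OF x_y_balance[of i j], of "zI d p j"] assms
    by (simp add: hbr_z_def split: if_splits)
qed

lemma x_at_1:
  assumes "i < d"
  shows "T (unit_vec (xI d i)) 1 = 0"
proof -
  obtain p where "p < d" "p \<noteq> i"
    using ex_index_avoiding[OF three_le_d] by blast
  then show ?thesis
    using fun_cong[OF x_y_balance[of i p], of "zI d p p"] assms x_at_x_off_diagonal[of i p]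
    by (simp add: hbr_z_def split: if_splits)
qed

lemma y_at_y_off_diagonal:
  assumes "j < d" "q < d" "q \<noteq> j"
  shows "T (unit_vec (yI d j)) (yI d q) = 0"
proof -
  obtain i where "i < d" "i \<noteq> q"
    using ex_index_avoiding[OF three_le_d] by blast
  then show ?thesis
    using fun_cong[OF x_y_balance[of i j], of "zI d i q"] assms
    by (simp add: hbr_z_def split: if_splits)
qed

lemma y_at_0:
  assumes "j < d"
  shows "T (unit_vec (yI d j)) 0 = 0"
proof -
  obtain q where "q < d" "q \<noteq> j"
    using ex_index_avoiding[OF three_le_d] by blast
  then show ?thesis
    using fun_cong[OF x_y_balance[of q j], of "zI d q q"] assms y_at_y_off_diagonal[of j q]
    by (simp add: hbr_z_def split: if_splits)
qed

lemma x_y_diagonal: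
  "i < d \<Longrightarrow> j < d \<Longrightarrow> T (unit_vec (xI d i)) (xI d i) = T (unit_vec (yI d j)) (yI d j)"
  using fun_cong[OF x_y_balance[of i j], of "zI d i j"] x_at_1[of i] y_at_0[of j]
  by (simp add: hbr_z_def split: if_splits)

lemma x_at_x: "i < d \<Longrightarrow> p < d \<Longrightarrow> T (unit_vec (xI d i)) (xI d p) = (if p = i then scalar else 0)"
  using x_at_x_off_diagonal x_y_diagonal[of i 0] x_y_diagonal[of 0 0] three_le_d
  by (simp add: scalar_def)

lemma y_at_y: "j < d \<Longrightarrow> q < d \<Longrightarrow> T (unit_vec (yI d j)) (yI d q) = (if q = j then scalar else 0)"
  using y_at_y_off_diagonal x_y_diagonal[of 0 j] three_le_d
  by (simp add: scalar_def)

lemma a_x_balance: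
  "i < d \<Longrightarrow>
    hbr d (T (unit_vec 0)) (unit_vec (xI d i)) = hbr d (T (unit_vec (xI d i))) (unit_vec (yI d i))"
  using commute_left[of "unit_vec 0" "unit_vec (xI d i)"]
    commute_left[of "unit_vec (xI d i)" "unit_vec (yI d i)"]
  by simp

lemma b_y_balance:
  "j < d \<Longrightarrow>
    hbr d (T (unit_vec 1)) (unit_vec (yI d j)) = hbr d (T (unit_vec (xI d j))) (unit_vec (yI d j))"
  using commute_left[of "unit_vec 1" "unit_vec (yI d j)"]
    commute_left[of "unit_vec (xI d j)" "unit_vec (yI d j)"]
  by simp

lemma a_at_y:
  assumes "q < d"
  shows "T (unit_vec 0) (yI d q) = 0"
proof -
  obtain i where "i < d" "i \<noteq> q"
    using ex_index_avoiding[OF three_le_d] by blast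
  then show ?thesis
    using fun_cong[OF a_x_balance[of i], of "zI d i q"] assms
    by (simp add: hbr_z_def split: if_splits)
qed

lemma a_at_0: "T (unit_vec 0) 0 = scalar"
  using fun_cong[OF a_x_balance[of 0], of "zI d 0 0"] three_le_d a_at_y[of 0] x_at_1[of 0]
  by (simp add: hbr_z_def scalar_def split: if_splits)

lemma b_at_x:
  assumes "p < d"
  shows "T (unit_vec 1) (xI d p) = 0"
proof -
  obtain j where "j < d" "j \<noteq> p"
    using ex_index_avoiding[OF three_le_d] by blast
  then show ?thesis
    using fun_cong[OF b_y_balance[of j], of "zI d p j"] assms x_at_x_off_diagonal[of j p]
    by (simp add: hbr_z_def split: if_splits)
qed

lemma b_at_1: "T (unit_vec 1) 1 = scalar"
  using fun_cong[OF b_y_balance[of 0], of "zI d 0 0"] three_le_d b_at_x[of 0] x_at_1[of 0]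
  by (simp add: hbr_z_def scalar_def split: if_splits)

lemma shifted_generator_images_in_hderived:
  "T (unit_vec 0) - csc scalar (unit_vec 0) \<in> hderived d"
  "T (unit_vec 1) - csc scalar (unit_vec 1) \<in> hderived d"
  "i < d \<Longrightarrow> T (unit_vec (xI d i)) - csc scalar (unit_vec (xI d i)) \<in> hderived d"
  "j < d \<Longrightarrow> T (unit_vec (yI d j)) - csc scalar (unit_vec (yI d j)) \<in> hderived d"
  using linear_V_in_V[OF linear_V_minus_scalar[OF linear], of _ scalar]
  by (auto simp: hderived_def a_at_0 a_at_1 a_at_x a_at_y b_at_0 b_at_1 b_at_x b_at_y
      x_at_0 x_at_1 x_at_x x_at_y y_at_0 y_at_1 y_at_x y_at_y)

lemma shifted_c_image_in_hcenter: "T (unit_vec 2) - csc scalar (unit_vec 2) \<in> hcenter d"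
proof -
  have "T (unit_vec 2) - csc scalar (unit_vec 2)
      = hbr d (T (unit_vec 0) - csc scalar (unit_vec 0)) (unit_vec 1)"
    using commute_left[of "unit_vec 0" "unit_vec 1"] by (simp add: hbr_diff_left hbr_csc_left)
  then show ?thesis
    using hbr_hderived_in_hcenter(2) three_le_d shifted_generator_images_in_hderived(1) by simp
qed

lemma shifted_z_image:
  assumes "p < d" "q < d"
  shows "T (unit_vec (zI d p q)) - csc scalar (unit_vec (zI d p q)) = 0"
proof -
  have "T (unit_vec (zI d p q)) - csc scalar (unit_vec (zI d p q))
      = hbr d (T (unit_vec (xI d p)) - csc scalar (unit_vec (xI d p))) (unit_vec (yI d q))"
    using commute_left[of "unit_vec (xI d p)" "unit_vec (yI d q)"] assms
    by (simp add: hbr_diff_left hbr_csc_left)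
  then show ?thesis
    using hbr_hderived_left three_le_d shifted_generator_images_in_hderived(3)[OF assms(1)] assms
    by (simp add: fun_eq_iff)
qed

lemma lowers_filtration_shifted: "lowers_filtration d (\<lambda>u. T u - csc scalar u)"
  by (rule lowers_filtrationI[OF linear_V_minus_scalar[OF linear] shifted_generator_images_in_hderived
        shifted_c_image_in_hcenter shifted_z_image])

end

lemma centroid_idempotent_cases:
  assumes "3 \<le> d" "is_centroid (hdim d) (hsc d) T"
    and idem: "\<And>u. u \<in> V (hdim d) \<Longrightarrow> T (T u) = T u"
  shows "(\<forall>u\<in>V (hdim d). T u = 0) \<or> (\<forall>u\<in>V (hdim d). T u = u)"
proof -
  interpret h_centroid d T using assms by unfold_locales
  define \<mu> where "\<mu> = scalar"
  let ?z = "unit_vec (zI d 0 0)"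
  have z: "?z \<in> V (hdim d)" "?z \<in> hcenter d"
    using assms(1) by (simp_all add: hcenter_def hderived_def)
  have shifted_cube: "(\<lambda>u. T u - csc \<mu> u) ((\<lambda>u. T u - csc \<mu> u) ((\<lambda>u. T u - csc \<mu> u) u)) = 0"
    if "u \<in> V (hdim d)" for u
    using lowers_filtration_cube[OF lowers_filtration_shifted that] by (simp add: \<mu>_def)
  have Tz: "T ?z = csc \<mu> ?z"
    using lowers_filtration_shifted z(2) by (auto simp: lowers_filtration_def \<mu>_def)
  have "csc \<mu> (csc \<mu> ?z) = csc \<mu> ?z"
    using idem[OF z(1)] linear_V_scale[OF linear z(1)] by (simp add: Tz)
  then have "\<mu> * \<mu> = \<mu>"
    using fun_cong[of _ _ "zI d 0 0"] by fastforce
  then consider "\<mu> = 0" | "\<mu> = 1"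
    by (metis mult_cancel_right1 mult_zero_left)
  then show ?thesis
  proof cases
    case 1
    have "T u = 0" if "u \<in> V (hdim d)" for u
      using shifted_cube[OF that] idem[OF that] idem[OF linear_V_in_V[OF linear that]] 1 by simp
    then show ?thesis by blast
  next
    case 2
    have "T u = u" if u: "u \<in> V (hdim d)" for u
    proof -
      define w where "w = T u - u"
      have w: "w \<in> V (hdim d)"
        using u linear_V_in_V[OF linear] by (simp add: w_def cv.subspace_diff[OF subspace_V])
      have Tw: "T w = 0"
        using u linear_V_diff[OF linear _ u] linear_V_in_V[OF linear u] idem[OF u] by (simp add: w_def)
      have "T (- w) = 0"
        using linear_V_diff[OF linear V_zero w] zero Tw by simp
      then have "w = 0"
        using shifted_cube[OF u] 2 Tw by (simp add: w_def[symmetric])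
      then show ?thesis by (simp add: w_def)
    qed
    then show ?thesis by blast
  qed
qed

lemma nonsplit_h:
  assumes "3 \<le> d"
  shows "nonsplit (hdim d) (hsc d)"
  unfolding nonsplit_def
proof
  assume "\<exists>I J. is_ideal (hdim d) (hsc d) I \<and> is_ideal (hdim d) (hsc d) J \<and> I \<noteq> {0} \<and> J \<noteq> {0}
      \<and> I \<inter> J = {0} \<and> {x + y | x y. x \<in> I \<and> y \<in> J} = V (hdim d)"
  then obtain I J where "is_ideal (hdim d) (hsc d) I" "is_ideal (hdim d) (hsc d) J"
      and nonzero: "I \<noteq> {0}" "J \<noteq> {0}"
      and "I \<inter> J = {0}" "{x + y | x y. x \<in> I \<and> y \<in> J} = V (hdim d)"
    by blast
  then interpret ideal_decomposition "hdim d" "hsc d" I J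
    using is_lie_h assms by unfold_locales auto
  have "(\<forall>u\<in>V (hdim d). proj_along I J u = 0) \<or> (\<forall>u\<in>V (hdim d). proj_along I J u = u)"
    using assms centroid_proj_along proj_along_idem by (rule centroid_idempotent_cases)
  then show False
  proof
    assume "\<forall>u\<in>V (hdim d). proj_along I J u = 0"
    then have "x = 0" if "x \<in> I" for x
      using that proj_along_I I_subset_V by force
    then show False
      using nonzero(1) cv.subspace_0[OF subspace_I] by blast
  next
    assume "\<forall>u\<in>V (hdim d). proj_along I J u = u"
    then have "y = 0" if "y \<in> J" for y
      using that proj_along_J J_subset_V by force
    then show False
      using nonzero(2) cv.subspace_0[OF subspace_J] by blast
  qed
qed

section \<open>The ratio of dimensions\<close>

lemma center_ratio_le:
  assumes "1 \<le> d"
  shows "(real (hdim d) - real (d * d)) / real (d * d) \<le> 5 / real d"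
proof -
  have "real (hdim d) - real (d * d) = 3 + 2 * real d"
    by (simp add: hdim_def)
  also have "\<dots> \<le> 5 * real d"
    using assms by simp
  finally have "(real (hdim d) - real (d * d)) / real (d * d) \<le> 5 * real d / real (d * d)"
    by (rule divide_right_mono) simp
  also have "\<dots> = 5 / real d"
    using assms by simp
  finally show ?thesis .
qed

theorem mainTheorem2:
  fixes \<epsilon> :: real
  assumes "\<epsilon> > 0"
  shows "\<exists>n c. is_lie n c \<and> nonsplit n c \<and> char_nilpotent n c \<and>
           cdim (center n c) > 0 \<and>
           (real n - real (cdim (center n c))) / real (cdim (center n c)) < \<epsilon>"
proof -
  define d where "d = nat \<lceil>5 / \<epsilon>\<rceil> + 3"
  have d: "3 \<le> d" "5 / \<epsilon> < real d"
    unfolding d_def by linarith+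
  then have "5 / real d < \<epsilon>"
    using assms by (simp add: divide_less_eq mult.commute)
  then have "(real (hdim d) - real (d * d)) / real (d * d) < \<epsilon>"
    using center_ratio_le[of d] d(1) by linarith
  moreover have "cdim (center (hdim d) (hsc d)) = d * d"
    using cdim_center_h d(1) by simp
  ultimately show ?thesis
    using is_lie_h[of d] nonsplit_h[OF d(1)] char_nilpotent_h[OF d(1)] d(1)
    by (intro exI[of _ "hdim d"] exI[of _ "hsc d"]) simp
qed

end
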